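(* Let $(X,\preceq)$ be a partially ordered set and suppose there is a metric $d$ on $X$ such that $(X,d)$ is complete. Let $f,g,H:X\to X$ be mappings such that: (a) $f(X)\subseteq H(X)$ and $g(X)\subseteq H(X)$; (b) $f$, $g$ and $H$ are continuous; (c) the pairs $\{f,H\}$ and $\{g,H\}$ are compatible; (d) $f$ and $g$ are weakly increasing with respect to $H$. Suppose there is $\beta\in\mathcal S$ such that for every $(x,y)\in X\times X$ with $Hx$ and $Hy$ comparable, $$d(fx,gy)\le \beta\big(d(Hx,Hy)\big)\,d(Hx,Hy).$$ Then $f$, $g$ and $H$ have a coincidence point, i.e. there exists $u\in X$ with $fu=gu=Hu$.
   Context: $\mathcal S$ denotes the class of functions $\beta:[0,\infty)\to[0,1)$ such that for every sequence $(t_n)$ in $[0,\infty)$, $\beta(t_n)\to 1$ implies $t_n\to 0$. A pair $\{f,g\}$ of self-maps of a metric space $(X,d)$ is compatible if $\lim_{n\to\infty} d(fgx_n,gfx_n)=0$ whenever $(x_n)$ is a sequence in $X$ with $\lim fx_n=\lim gx_n=t$ for some $t\in X$. For $R:X\to X$ and $x\in X$, $R^{-1}(x)=\{u\in X: Ru=x\}$. Given mappings $T,S,R:X\to X$ on a partially ordered set with $T(X)\subseteq R(X)$ and $S(X)\subseteq R(X)$, $S$ and $T$ are weakly increasing with respect to $R$ if for all $x\in X$: $Tx\preceq Sy$ for all $y\in R^{-1}(Tx)$, and $Sx\preceq Ty$ for all $y\in R^{-1}(Sx)$. A coincidence point of maps $T_1,\dots,T_N$ is a point $x$ with $T_1x=\dots=T_Nx$.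 *)

theory Defs
  imports "HOL-Analysis.Analysis"
begin

definition class_S :: "(real \<Rightarrow> real) \<Rightarrow> bool" where
  "class_S \<beta> \<longleftrightarrow>
     (\<forall>t\<ge>0. 0 \<le> \<beta> t \<and> \<beta> t < 1) \<and>
     (\<forall>t :: nat \<Rightarrow> real. (\<forall>n. t n \<ge> 0) \<longrightarrow> (\<lambda>n. \<beta> (t n)) \<longlonglongrightarrow> 1 \<longrightarrow> t \<longlonglongrightarrow> 0)"

definition compatible :: "('a::metric_space \<Rightarrow> 'a) \<Rightarrow> ('a \<Rightarrow> 'a) \<Rightarrow> bool" where
  "compatible f g \<longleftrightarrow>
     (\<forall>x :: nat \<Rightarrow> 'a. \<forall>t. (\<lambda>n. f (x n)) \<longlonglongrightarrow> t \<longrightarrow> (\<lambda>n. g (x n)) \<longlonglongrightarrow> t \<longrightarrow>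
        (\<lambda>n. dist (f (g (x n))) (g (f (x n)))) \<longlonglongrightarrow> 0)"

definition weakly_increasing_wrt ::
  "('a \<Rightarrow> 'a \<Rightarrow> bool) \<Rightarrow> ('a \<Rightarrow> 'a) \<Rightarrow> ('a \<Rightarrow> 'a) \<Rightarrow> ('a \<Rightarrow> 'a) \<Rightarrow> bool" where
  "weakly_increasing_wrt le T S R \<longleftrightarrow>
     (\<forall>x. (\<forall>y. R y = T x \<longrightarrow> le (T x) (S y)) \<and> (\<forall>y. R y = S x \<longrightarrow> le (S x) (T y)))"

end

theory Submission
  imports Defs
begin

(*
  Idea (a Jungck-type iteration).  Since f and g take values in the range of H we can choose
  points x 0, x 1, ... with  H (x (n+1)) = g (x n)  for even n and  H (x (n+1)) = f (x n)  for
  odd n.  Weak increase of f, g with respect to H makes  z n = H (x n)  a chain, so any two of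
  its terms are comparable and the contractive condition applies to consecutive steps of
  opposite parity.  Because beta is of class S, it stays a fixed amount below 1 away from 0;
  this forces the step sizes  dist (z n) (z (n+1))  to tend to 0 and then z to be Cauchy.
  By completeness z converges to some u, and the compatibility of {f,H} and {g,H} together
  with continuity turns this into  f u = H u = g u.
*)

lemma class_S_bounded_away:
  assumes beta_S: "class_S \<beta>" and e: "e > 0"
  shows "\<exists>\<delta>>0. \<forall>t\<ge>e. \<beta> t \<le> 1 - \<delta>"
proof (rule ccontr)
  assume "\<not> ?thesis"
  hence "\<forall>n::nat. \<exists>t\<ge>e. \<beta> t > 1 - inverse (real (Suc n))"
    by (auto simp: not_le)
  then obtain t where t: "\<And>n. t n \<ge> e" "\<And>n. \<beta> (t n) > 1 - inverse (real (Suc n))"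
    by metis
  have "(\<lambda>n. \<beta> (t n)) \<longlonglongrightarrow> 1"
  proof (rule real_tendsto_sandwich)
    show "\<forall>\<^sub>F n in sequentially. 1 - inverse (real (Suc n)) \<le> \<beta> (t n)"
      using t(2) by (simp add: less_imp_le)
    show "\<forall>\<^sub>F n in sequentially. \<beta> (t n) \<le> 1"
      using beta_S t(1) e unfolding class_S_def by (meson always_eventually less_imp_le order_trans)
    show "(\<lambda>n. 1 - inverse (real (Suc n))) \<longlonglongrightarrow> 1"
      using tendsto_diff[OF tendsto_const LIMSEQ_inverse_real_of_nat, of 1] by simp
  qed simp
  hence "t \<longlonglongrightarrow> 0"
    using beta_S t(1) e unfolding class_S_def by (meson less_imp_le order_trans)
  hence "e \<le> 0"
    using t(1) by (intro LIMSEQ_le_const[of t 0 e]) auto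
  thus False using e by simp
qed

lemma class_S_iteration_tendsto_zero:
  fixes a :: "nat \<Rightarrow> real"
  assumes beta_S: "class_S \<beta>"
    and nonneg: "\<And>n. a n \<ge> 0"
    and step: "\<And>n. a (Suc n) \<le> \<beta> (a n) * a n"
  shows "a \<longlonglongrightarrow> 0"
proof -
  have beta_lt_1: "\<beta> (a n) < 1" for n
    using beta_S nonneg[of n] unfolding class_S_def by auto
  have "a (Suc n) \<le> a n" for n
    using step[of n] mult_right_mono[OF less_imp_le[OF beta_lt_1[of n]] nonneg[of n]] by simp
  hence "decseq a" by (simp add: decseq_SucI)
  then obtain L where lim: "a \<longlonglongrightarrow> L" and below: "\<And>n. L \<le> a n"
    using decseq_convergent[of a 0] nonneg by blast
  have "L \<le> 0"
  proof (rule ccontr)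
    assume "\<not> L \<le> 0"
    then obtain \<delta> where \<delta>: "\<delta> > 0" "\<And>t. t \<ge> L \<Longrightarrow> \<beta> t \<le> 1 - \<delta>"
      using class_S_bounded_away[OF beta_S] by (meson not_le)
    have "a (Suc n) \<le> (1 - \<delta>) * a n" for n
      using step[of n] mult_right_mono[OF \<delta>(2)[OF below[of n]] nonneg[of n]] by simp
    moreover have "(\<lambda>n. a (Suc n)) \<longlonglongrightarrow> L" using lim by (rule LIMSEQ_Suc)
    moreover have "(\<lambda>n. (1 - \<delta>) * a n) \<longlonglongrightarrow> (1 - \<delta>) * L" using lim by (intro tendsto_intros)
    ultimately have "L \<le> (1 - \<delta>) * L" by (intro LIMSEQ_le) auto
    hence "\<delta> * L \<le> 0" by (simp add: algebra_simps)
    thus False using \<delta>(1) \<open>\<not> L \<le> 0\<close> by (simp add: mult_le_0_iff)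
  qed
  moreover have "L \<ge> 0" using lim nonneg by (intro LIMSEQ_le_const) auto
  ultimately show ?thesis using lim by simp
qed

section \<open>Alternately contractive sequences are Cauchy\<close>

definition alternately_contractive :: "(real \<Rightarrow> real) \<Rightarrow> (nat \<Rightarrow> 'a::metric_space) \<Rightarrow> bool" where
  "alternately_contractive \<beta> z \<longleftrightarrow>
     (\<forall>n m. odd (n + m) \<longrightarrow>
        dist (z (Suc n)) (z (Suc m)) \<le> \<beta> (dist (z n) (z m)) * dist (z n) (z m))"

lemma alternately_contractive_steps_tendsto_zero:
  assumes "class_S \<beta>" and "alternately_contractive \<beta> z"
  shows "(\<lambda>n. dist (z n) (z (Suc n))) \<longlonglongrightarrow> 0"
  using assms by (intro class_S_iteration_tendsto_zero[of \<beta>])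
    (auto simp: alternately_contractive_def)

text \<open>Once the steps are small, terms with indices of opposite parity are close: if
  d = dist (z n) (z m) \<ge> e, the triangle inequality through z (n+1), z (m+1) gives
  d \<le> (step n) + \<beta> d * d + (step m), i.e. \<delta> * e \<le> \<delta> * d \<le> step n + step m.\<close>
lemma alternately_contractive_opposite_parity_close:
  assumes beta_S: "class_S \<beta>" and contr: "alternately_contractive \<beta> z" and e: "e > 0"
  shows "\<exists>N. \<forall>n\<ge>N. \<forall>m\<ge>N. odd (n + m) \<longrightarrow> dist (z n) (z m) < e"
proof -
  define a where "a n = dist (z n) (z (Suc n))" for n
  obtain \<delta> where \<delta>: "\<delta> > 0" "\<And>t. t \<ge> e \<Longrightarrow> \<beta> t \<le> 1 - \<delta>"
    using class_S_bounded_away[OF beta_S e] by blast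
  have "a \<longlonglongrightarrow> 0"
    unfolding a_def by (rule alternately_contractive_steps_tendsto_zero[OF beta_S contr])
  hence "\<forall>\<^sub>F n in sequentially. a n < \<delta> * e / 2"
    using \<delta>(1) e by (intro order_tendstoD(2)) auto
  then obtain N where N: "\<And>n. n \<ge> N \<Longrightarrow> a n < \<delta> * e / 2"
    unfolding eventually_sequentially by blast
  have "dist (z n) (z m) < e" if nm: "n \<ge> N" "m \<ge> N" "odd (n + m)" for n m
  proof (rule ccontr)
    define d where "d = dist (z n) (z m)"
    assume "\<not> dist (z n) (z m) < e"
    hence d_ge: "d \<ge> e" unfolding d_def by simp
    have "d \<le> a n + dist (z (Suc n)) (z (Suc m)) + a m"
      unfolding d_def a_def
      using dist_triangle[of "z n" "z m" "z (Suc n)"] dist_triangle[of "z (Suc n)" "z m" "z (Suc m)"]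
      by (simp add: dist_commute)
    also have "\<dots> \<le> a n + \<beta> d * d + a m"
      using contr nm(3) unfolding alternately_contractive_def d_def by simp
    also have "\<beta> d * d \<le> (1 - \<delta>) * d"
      using \<delta>(2)[OF d_ge] d_ge e by (intro mult_right_mono) auto
    finally have "\<delta> * d \<le> a n + a m" by (simp add: algebra_simps)
    moreover have "\<delta> * e \<le> \<delta> * d" using \<delta>(1) d_ge by simp
    moreover have "a n + a m < \<delta> * e" using N[OF nm(1)] N[OF nm(2)] by simp
    ultimately show False by simp
  qed
  thus ?thesis by blast
qed

text \<open>An alternately contractive sequence is Cauchy: for indices of equal parity,
  insert one extra step to reduce to the opposite-parity case.\<close>
lemma alternately_contractive_Cauchy:
  assumes beta_S: "class_S \<beta>" and contr: "alternately_contractive \<beta> z"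
  shows "Cauchy z"
proof (rule metric_CauchyI)
  fix e :: real assume e: "e > 0"
  obtain N1 where N1: "\<And>n m. n \<ge> N1 \<Longrightarrow> m \<ge> N1 \<Longrightarrow> odd (n + m) \<Longrightarrow> dist (z n) (z m) < e / 2"
    using alternately_contractive_opposite_parity_close[OF beta_S contr, of "e / 2"] e by auto
  have "(\<lambda>n. dist (z n) (z (Suc n))) \<longlonglongrightarrow> 0"
    by (rule alternately_contractive_steps_tendsto_zero[OF beta_S contr])
  hence "\<forall>\<^sub>F n in sequentially. dist (z n) (z (Suc n)) < e / 2"
    using e by (intro order_tendstoD(2)) auto
  then obtain N2 where N2: "\<And>n. n \<ge> N2 \<Longrightarrow> dist (z n) (z (Suc n)) < e / 2"
    unfolding eventually_sequentially by blast
  have "dist (z m) (z n) < e" if mn: "m \<ge> max N1 N2" "n \<ge> max N1 N2" for m n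
  proof (cases "odd (m + n)")
    case True
    then show ?thesis using N1[of m n] mn e by simp
  next
    case False
    have "dist (z m) (z n) \<le> dist (z m) (z (Suc n)) + dist (z (Suc n)) (z n)"
      by (rule dist_triangle)
    also have "\<dots> < e / 2 + e / 2"
      using N1[of m "Suc n"] N2[of n] mn False by (intro add_strict_mono) (auto simp: dist_commute)
    finally show ?thesis by simp
  qed
  thus "\<exists>M. \<forall>m\<ge>M. \<forall>n\<ge>M. dist (z m) (z n) < e" by blast
qed

section \<open>The Jungck sequence of f, g with respect to H\<close>

definition jungck_sequence :: "('a \<Rightarrow> 'b) \<Rightarrow> ('a \<Rightarrow> 'b) \<Rightarrow> ('a \<Rightarrow> 'b) \<Rightarrow> (nat \<Rightarrow> 'a) \<Rightarrow> bool" where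
  "jungck_sequence f g H x \<longleftrightarrow>
     H (x 0) \<in> range f \<and> (\<forall>n. H (x (Suc n)) = (if even n then g else f) (x n))"

lemma jungck_sequence_exists:
  fixes f g H :: "'a \<Rightarrow> 'b"
  assumes range_f: "range f \<subseteq> range H" and range_g: "range g \<subseteq> range H"
  obtains x where "jungck_sequence f g H x"
proof -
  have "f v \<in> range H" "g v \<in> range H" for v
    using range_f range_g by auto
  hence pre: "\<exists>y. H y = f v" "\<exists>y. H y = g v" for v
    by (metis rangeE)+
  \<comment> \<open>any starting point works; we start from an H-preimage of f undefined\<close>
  define p :: 'a where "p = undefined"
  define x where "x = rec_nat (SOME y. H y = f p) (\<lambda>n xn. SOME y. H y = (if even n then g else f) xn)"
  have "H (x 0) = f p" unfolding x_def using someI_ex[OF pre(1)] by simp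
  moreover have "H (x (Suc n)) = (if even n then g else f) (x n)" for n
    unfolding x_def using someI_ex[OF pre(1)] someI_ex[OF pre(2)] by simp
  ultimately show ?thesis using that unfolding jungck_sequence_def by blast
qed

text \<open>Weak increase makes H \<circ> x a chain: each term H (x n) is a value of f (n even) or of g
  (n odd), and the next term is a value of the other map at an H-preimage of it.\<close>
lemma jungck_sequence_chain:
  assumes refl: "\<And>x. le x x" and trans: "\<And>x y z. le x y \<Longrightarrow> le y z \<Longrightarrow> le x z"
    and weak_inc: "weakly_increasing_wrt le f g H"
    and x: "jungck_sequence f g H x"
    and "m \<le> n"
  shows "le (H (x m)) (H (x n))"
proof -
  have value_of: "(even n \<longrightarrow> H (x n) \<in> range f) \<and> (odd n \<longrightarrow> H (x n) \<in> range g)" for n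
    using x unfolding jungck_sequence_def by (cases n) auto
  have "le (H (x n)) (H (x (Suc n)))" for n
    using value_of[of n] x weak_inc unfolding jungck_sequence_def weakly_increasing_wrt_def
    by (cases "even n") auto
  thus ?thesis
    using transitive_stepwise_le[OF \<open>m \<le> n\<close>, of "\<lambda>m n. le (H (x m)) (H (x n))"] refl trans by blast
qed

lemma jungck_sequence_alternately_contractive:
  assumes x: "jungck_sequence f g H x"
    and comparable: "\<And>m n. le (H (x m)) (H (x n)) \<or> le (H (x n)) (H (x m))"
    and contr: "\<And>x y. le (H x) (H y) \<or> le (H y) (H x) \<Longrightarrow>
                 dist (f x) (g y) \<le> \<beta> (dist (H x) (H y)) * dist (H x) (H y)"
  shows "alternately_contractive \<beta> (\<lambda>n. H (x n))"
proof -
  have even_odd: "dist (H (x (Suc n))) (H (x (Suc m))) \<le> \<beta> (dist (H (x n)) (H (x m))) * dist (H (x n)) (H (x m))"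
    if "even n" "odd m" for n m
    using contr[OF comparable[of m n]] x that unfolding jungck_sequence_def
    by (simp add: dist_commute)
  show ?thesis
    unfolding alternately_contractive_def
  proof (intro allI impI)
    fix n m :: nat assume "odd (n + m)"
    then consider "even n" "odd m" | "odd n" "even m" by auto
    then show "dist (H (x (Suc n))) (H (x (Suc m))) \<le> \<beta> (dist (H (x n)) (H (x m))) * dist (H (x n)) (H (x m))"
      by cases (use even_odd[of n m] even_odd[of m n] in \<open>simp_all add: dist_commute\<close>)
  qed
qed

text \<open>If {T, H} is compatible and both maps are continuous, a common limit u of T (y k) and
  H (y k) is a coincidence point: T (H (y k)) \<rightarrow> T u, H (T (y k)) \<rightarrow> H u, and their
  distance tends to 0.\<close>
lemma compatible_common_limit_coincidence:
  assumes compat: "compatible T H"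
    and cont_T: "continuous_on UNIV T" and cont_H: "continuous_on UNIV H"
    and lim_T: "(\<lambda>k. T (y k)) \<longlonglongrightarrow> u" and lim_H: "(\<lambda>k. H (y k)) \<longlonglongrightarrow> u"
  shows "T u = H u"
proof -
  have to_zero: "(\<lambda>k. dist (T (H (y k))) (H (T (y k)))) \<longlonglongrightarrow> 0"
    using compat lim_T lim_H unfolding compatible_def by blast
  have "(\<lambda>k. T (H (y k))) \<longlonglongrightarrow> T u" "(\<lambda>k. H (T (y k))) \<longlonglongrightarrow> H u"
    using continuous_on_tendsto_compose[OF cont_T lim_H] continuous_on_tendsto_compose[OF cont_H lim_T]
    by auto
  hence "(\<lambda>k. dist (T (H (y k))) (H (T (y k)))) \<longlonglongrightarrow> dist (T u) (H u)"
    by (rule tendsto_dist)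
  hence "dist (T u) (H u) = 0" using LIMSEQ_unique[OF _ to_zero] by blast
  thus ?thesis by simp
qed

lemma LIMSEQ_double_index:
  assumes "X \<longlonglongrightarrow> L"
  shows "(\<lambda>k. X (2 * k + c)) \<longlonglongrightarrow> L"
proof -
  have "strict_mono (\<lambda>k::nat. 2 * k + c)" by (simp add: strict_mono_Suc_iff)
  from LIMSEQ_subseq_LIMSEQ[OF assms this] show ?thesis by (simp add: comp_def)
qed

theorem theorem2p5:
  fixes le :: "'a::metric_space \<Rightarrow> 'a \<Rightarrow> bool"
    and f g H :: "'a \<Rightarrow> 'a"
    and \<beta> :: "real \<Rightarrow> real"
  assumes refl: "\<And>x. le x x"
    and antisym: "\<And>x y. le x y \<Longrightarrow> le y x \<Longrightarrow> x = y"
    and trans: "\<And>x y z. le x y \<Longrightarrow> le y z \<Longrightarrow> le x z"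
    and complete: "complete (UNIV :: 'a set)"
    and range_f: "range f \<subseteq> range H"
    and range_g: "range g \<subseteq> range H"
    and cont_f: "continuous_on UNIV f"
    and cont_g: "continuous_on UNIV g"
    and cont_H: "continuous_on UNIV H"
    and compat_fH: "compatible f H"
    and compat_gH: "compatible g H"
    and weak_inc: "weakly_increasing_wrt le f g H"
    and beta_S: "class_S \<beta>"
    and contr: "\<And>x y. le (H x) (H y) \<or> le (H y) (H x) \<Longrightarrow>
                 dist (f x) (g y) \<le> \<beta> (dist (H x) (H y)) * dist (H x) (H y)"
  shows "\<exists>u. f u = g u \<and> g u = H u"
proof -
  obtain x where x: "jungck_sequence f g H x"
    using jungck_sequence_exists[OF range_f range_g] by blast
  have "le (H (x m)) (H (x n)) \<or> le (H (x n)) (H (x m))" for m n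
    using jungck_sequence_chain[OF refl trans weak_inc x, where m = m and n = n]
      jungck_sequence_chain[OF refl trans weak_inc x, where m = n and n = m]
    by (cases "m \<le> n") simp_all
  hence "alternately_contractive \<beta> (\<lambda>n. H (x n))"
    by (rule jungck_sequence_alternately_contractive[OF x _ contr])
  hence "Cauchy (\<lambda>n. H (x n))"
    by (rule alternately_contractive_Cauchy[OF beta_S])
  then obtain u where u: "(\<lambda>n. H (x n)) \<longlonglongrightarrow> u"
    using complete unfolding complete_def by blast
  have step: "H (x (Suc n)) = (if even n then g else f) (x n)" for n
    using x unfolding jungck_sequence_def by blast
  have "f u = H u"
  proof (rule compatible_common_limit_coincidence[OF compat_fH cont_f cont_H])
    show "(\<lambda>k. f (x (2 * k + 1))) \<longlonglongrightarrow> u"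
      using LIMSEQ_double_index[OF u, of 2] step[of "2 * k + 1" for k] by (simp add: algebra_simps)
    show "(\<lambda>k. H (x (2 * k + 1))) \<longlonglongrightarrow> u" by (rule LIMSEQ_double_index[OF u])
  qed
  moreover have "g u = H u"
  proof (rule compatible_common_limit_coincidence[OF compat_gH cont_g cont_H])
    show "(\<lambda>k. g (x (2 * k))) \<longlonglongrightarrow> u"
      using LIMSEQ_double_index[OF u, of 1] step[of "2 * k" for k] by simp
    show "(\<lambda>k. H (x (2 * k))) \<longlonglongrightarrow> u" using LIMSEQ_double_index[OF u, of 0] by simp
  qed
  ultimately show ?thesis by (intro exI[of _ u]) simp
qed

end
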